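(* Let $f:\mathcal D_n^+\to\mathcal D_n^+$ be contracting for the stable semi-metric, i.e. there exists $\lambda\in(0,1)$ with $d_s(f(\Delta),f(\Delta'))\le\lambda\, d_s(\Delta,\Delta')$ for all $\Delta,\Delta'\in\mathcal D_n^+$. Then $f$ admits a unique fixed point $\Delta^*\in\mathcal D_n^+$, $\Delta^*=f(\Delta^* )$.
   Context: $\mathcal D_n^+$ is the set of $n\times n$ diagonal matrices with positive diagonal entries. The stable semi-metric is $d_s(\Delta,\Delta')=\left\|\frac{\Delta-\Delta'}{\sqrt{\Delta\Delta'}}\right\|=\max_i\frac{|\Delta_i-\Delta'_i|}{\sqrt{\Delta_i\Delta'_i}}$. *)

theory Defs
  imports "HOL-Analysis.Analysis"
begin

text \<open>Positive diagonal n x n matrices, represented by their diagonal vectors.\<close>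
definition Dpos :: "(real ^ 'n) set" where
  "Dpos = {d. \<forall>i. d $ i > 0}"

text \<open>Stable semi-metric: max over i of |d_i - d'_i| / sqrt(d_i d'_i) (operator norm of a diagonal matrix).\<close>
definition d_s :: "real ^ 'n \<Rightarrow> real ^ 'n \<Rightarrow> real" where
  "d_s d d' = Max (range (\<lambda>i. \<bar>d $ i - d' $ i\<bar> / sqrt (d $ i * d' $ i)))"

end

theory Submission
  imports Defs
begin

text \<open>The semi-metric d_s has no triangle inequality, so the Banach fixed point theorem does not
  apply directly. Instead one runs the Picard iteration from the identity: its consecutive steps
  shrink geometrically in d_s, and since |ln a - ln b| is at most twice the i-th term of d_s, the
  logarithms of every diagonal entry form a Cauchy sequence. Hence the iterates converge to a
  positive diagonal matrix, which is fixed because d_s is continuous and vanishes only on the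
  diagonal; uniqueness follows directly from the contraction inequality.\<close>

lemma ln_diff_le_diff_div_sqrt:
  fixes a b :: real
  assumes "0 < b" "b \<le> a"
  shows "ln a - ln b \<le> 2 * ((a - b) / sqrt (a * b))"
proof -
  define p q where "p = sqrt a" and "q = sqrt b"
  have pq: "0 < q" "q \<le> p" using assms by (auto simp: p_def q_def)
  have a: "a = p * p" and b: "b = q * q" using assms by (auto simp: p_def q_def)
  have "ln a - ln b = 2 * ln (p / q)"
    using pq by (simp add: a b ln_mult ln_div)
  also have "ln (p / q) \<le> p / q - 1"
    using pq by (intro ln_le_minus_one) simp
  also have "\<dots> \<le> p / q - q / p"
    using pq by simp
  also have "\<dots> = (a - b) / sqrt (a * b)"
    using pq by (simp add: a b real_sqrt_mult diff_divide_distrib)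
  finally show ?thesis by simp
qed

lemma abs_ln_diff_le:
  fixes a b :: real
  assumes "0 < a" "0 < b"
  shows "\<bar>ln a - ln b\<bar> \<le> 2 * (\<bar>a - b\<bar> / sqrt (a * b))"
proof (cases "b \<le> a")
  case True
  then show ?thesis
    using assms ln_diff_le_diff_div_sqrt[of b a] by simp
next
  case False
  then show ?thesis
    using assms ln_diff_le_diff_div_sqrt[of a b] by (simp add: mult.commute abs_minus_commute)
qed

lemma tendsto_Max_image:
  fixes g :: "'i \<Rightarrow> 'b \<Rightarrow> 'a::linorder_topology"
  assumes "finite I" "I \<noteq> {}" "\<And>i. i \<in> I \<Longrightarrow> (g i \<longlongrightarrow> a i) F"
  shows "((\<lambda>x. Max ((\<lambda>i. g i x) ` I)) \<longlongrightarrow> Max (a ` I)) F"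
  using assms
proof (induction I rule: finite_ne_induct)
  case (singleton i)
  then show ?case by simp
next
  case (insert i I)
  then show ?case by (simp add: tendsto_max)
qed

lemma d_s_component_le: "\<bar>d $ i - d' $ i\<bar> / sqrt (d $ i * d' $ i) \<le> d_s d d'"
  unfolding d_s_def by (rule Max_ge) auto

lemma d_s_nonneg:
  assumes "d \<in> Dpos" "d' \<in> Dpos"
  shows "0 \<le> d_s d d'"
proof -
  have "0 < d $ i * d' $ i" for i
    using assms by (simp add: Dpos_def)
  then have "0 \<le> \<bar>d $ i - d' $ i\<bar> / sqrt (d $ i * d' $ i)" for i
    by (simp add: less_imp_le)
  then show ?thesis
    using d_s_component_le order_trans by blast
qed

lemma d_s_self [simp]: "d_s d d = 0"
  by (simp add: d_s_def)

lemma d_s_eq_0_iff: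
  assumes "d \<in> Dpos" "d' \<in> Dpos"
  shows "d_s d d' = 0 \<longleftrightarrow> d = d'"
proof
  assume "d_s d d' = 0"
  have "d $ i = d' $ i" for i
  proof -
    have "0 < d $ i * d' $ i" using assms by (simp add: Dpos_def)
    then show ?thesis
      using d_s_component_le[of d i d'] \<open>d_s d d' = 0\<close> by (simp add: divide_le_0_iff)
  qed
  then show "d = d'" by (simp add: vec_eq_iff)
qed simp

lemma abs_ln_diff_le_d_s:
  assumes "d \<in> Dpos" "d' \<in> Dpos"
  shows "\<bar>ln (d $ i) - ln (d' $ i)\<bar> \<le> 2 * d_s d d'"
  using abs_ln_diff_le[of "d $ i" "d' $ i"] d_s_component_le[of d i d'] assms
  by (simp add: Dpos_def)

lemma tendsto_d_s:
  assumes "(x \<longlongrightarrow> y) F" "(x' \<longlongrightarrow> y') F" "y \<in> Dpos" "y' \<in> Dpos"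
  shows "((\<lambda>t. d_s (x t) (x' t)) \<longlongrightarrow> d_s y y') F"
  unfolding d_s_def
proof (rule tendsto_Max_image)
  fix i
  have "0 < y $ i" "0 < y' $ i"
    using assms(3,4) by (simp_all add: Dpos_def)
  then have "sqrt (y $ i * y' $ i) \<noteq> 0" by simp
  then show "((\<lambda>t. \<bar>x t $ i - x' t $ i\<bar> / sqrt (x t $ i * x' t $ i))
      \<longlongrightarrow> \<bar>y $ i - y' $ i\<bar> / sqrt (y $ i * y' $ i)) F"
    by (intro tendsto_intros assms(1,2))
qed auto

lemma convergent_of_summable_diff:
  fixes u :: "nat \<Rightarrow> 'a::real_normed_vector"
  assumes "summable (\<lambda>k. u (Suc k) - u k)"
  shows "convergent u"
proof -
  have "(\<lambda>n. u n - u 0) \<longlonglongrightarrow> suminf (\<lambda>k. u (Suc k) - u k)"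
    using summable_LIMSEQ[OF assms] by (simp add: sum_lessThan_telescope)
  then have "(\<lambda>n. u n - u 0 + u 0) \<longlonglongrightarrow> suminf (\<lambda>k. u (Suc k) - u k) + u 0"
    by (rule tendsto_add[OF _ tendsto_const])
  then show ?thesis by (auto simp: convergent_def)
qed

lemma Dpos_convergent_if_d_s_geometric:
  fixes x :: "nat \<Rightarrow> real ^ 'n"
  assumes in_Dpos: "\<And>k. x k \<in> Dpos"
    and step: "\<And>k. d_s (x (Suc k)) (x k) \<le> C * c ^ k"
    and c: "0 \<le> c" "c < 1"
  shows "\<exists>y\<in>Dpos. x \<longlonglongrightarrow> y"
proof -
  have pos: "0 < x k $ i" for k i
    using in_Dpos by (simp add: Dpos_def)
  have ln_convergent: "convergent (\<lambda>k. ln (x k $ i))" for i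
  proof (rule convergent_of_summable_diff, rule summable_comparison_test')
    show "summable (\<lambda>k. 2 * C * c ^ k)"
      using c by (intro summable_mult summable_geometric) auto
    show "norm (ln (x (Suc k) $ i) - ln (x k $ i)) \<le> 2 * C * c ^ k" for k
      using abs_ln_diff_le_d_s[OF in_Dpos[of "Suc k"] in_Dpos[of k], of i] step[of k] by simp
  qed
  define y where "y = (\<chi> i. exp (lim (\<lambda>k. ln (x k $ i))))"
  have "(\<lambda>k. x k $ i) \<longlonglongrightarrow> y $ i" for i
  proof -
    have "(\<lambda>k. exp (ln (x k $ i))) \<longlonglongrightarrow> y $ i"
      unfolding y_def using ln_convergent[of i] by (simp add: tendsto_exp convergent_LIMSEQ_iff)
    then show ?thesis using pos by simp
  qed
  then have "x \<longlonglongrightarrow> y" by (rule vec_tendstoI)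
  moreover have "y \<in> Dpos" by (simp add: y_def Dpos_def)
  ultimately show ?thesis by blast
qed

lemma funpow_in_invariant:
  assumes "\<forall>x\<in>S. f x \<in> S" "x \<in> S"
  shows "(f ^^ k) x \<in> S"
  using assms by (induction k) auto

lemma contraction_funpow_step_le:
  fixes \<delta> :: "'a \<Rightarrow> 'a \<Rightarrow> real"
  assumes maps: "\<forall>x\<in>S. f x \<in> S"
    and contr: "\<forall>x\<in>S. \<forall>y\<in>S. \<delta> (f x) (f y) \<le> c * \<delta> x y"
    and "0 \<le> c" "x \<in> S"
  shows "\<delta> ((f ^^ Suc k) x) ((f ^^ k) x) \<le> \<delta> (f x) x * c ^ k"
proof (induction k)
  case 0
  then show ?case by simp
next
  case (Suc k)
  have "\<delta> ((f ^^ Suc (Suc k)) x) ((f ^^ Suc k) x) = \<delta> (f ((f ^^ Suc k) x)) (f ((f ^^ k) x))"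
    by simp
  also have "\<dots> \<le> c * \<delta> ((f ^^ Suc k) x) ((f ^^ k) x)"
    using contr funpow_in_invariant[OF maps \<open>x \<in> S\<close>] by blast
  also have "\<dots> \<le> c * (\<delta> (f x) x * c ^ k)"
    using Suc.IH \<open>0 \<le> c\<close> by (rule mult_left_mono)
  finally show ?case by (simp add: mult_ac)
qed

lemma d_s_contraction_fixed_point_unique:
  assumes lip: "\<forall>d\<in>Dpos. \<forall>d'\<in>Dpos. d_s (f d) (f d') \<le> c * d_s d d'" and "c < 1"
    and "d \<in> Dpos" "d' \<in> Dpos" "f d = d" "f d' = d'"
  shows "d = d'"
proof -
  have "d_s d d' \<le> c * d_s d d'"
    using bspec[OF bspec[OF lip assms(3)] assms(4)] assms(5,6) by simp
  then have "(1 - c) * d_s d d' \<le> 0" by (simp add: algebra_simps)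
  then have "d_s d d' = 0"
    using \<open>c < 1\<close> d_s_nonneg[OF assms(3,4)] by (simp add: mult_le_0_iff)
  then show ?thesis using d_s_eq_0_iff assms(3,4) by blast
qed

theorem theorem2:
  fixes f :: "real ^ 'n \<Rightarrow> real ^ 'n"
  assumes maps: "\<forall>d\<in>Dpos. f d \<in> Dpos"
    and contr: "\<exists>c. 0 < c \<and> c < 1 \<and>
                 (\<forall>d\<in>Dpos. \<forall>d'\<in>Dpos. d_s (f d) (f d') \<le> c * d_s d d')"
  shows "\<exists>!d. d \<in> Dpos \<and> f d = d"
proof -
  obtain c where c: "0 < c" "c < 1"
    and lip: "\<forall>d\<in>Dpos. \<forall>d'\<in>Dpos. d_s (f d) (f d') \<le> c * d_s d d'"
    using contr by blast
  define x where "x k = (f ^^ k) (\<chi> i. 1)" for k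
  have x_Dpos: "x k \<in> Dpos" for k
    unfolding x_def by (rule funpow_in_invariant[OF maps]) (simp add: Dpos_def)
  have steps: "d_s (x (Suc k)) (x k) \<le> d_s (x 1) (x 0) * c ^ k" for k
    unfolding x_def using contraction_funpow_step_le[OF maps lip] c by (simp add: Dpos_def)
  obtain y where y: "y \<in> Dpos" "x \<longlonglongrightarrow> y"
    using Dpos_convergent_if_d_s_geometric[OF x_Dpos steps less_imp_le[OF c(1)] c(2)] by blast
  have fy: "f y \<in> Dpos" using maps y(1) by blast
  have "(\<lambda>k. d_s (f (x k)) (f y)) \<longlonglongrightarrow> d_s y (f y)"
    using tendsto_d_s[OF LIMSEQ_Suc[OF y(2)] tendsto_const y(1) fy] by (simp add: x_def)
  moreover have "(\<lambda>k. c * d_s (x k) y) \<longlonglongrightarrow> c * d_s y y"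
    by (intro tendsto_mult tendsto_const tendsto_d_s y)
  ultimately have "d_s y (f y) \<le> c * d_s y y"
    using lip x_Dpos y(1) by (intro LIMSEQ_le) auto
  then have "f y = y"
    using d_s_eq_0_iff[OF y(1) fy] d_s_nonneg[OF y(1) fy] by simp
  moreover have "d = d'" if "d \<in> Dpos" "d' \<in> Dpos" "f d = d" "f d' = d'" for d d'
    using d_s_contraction_fixed_point_unique[OF lip c(2) that] .
  ultimately show ?thesis using y(1) by blast
qed

end
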